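(* Let $(S^1,V^1)$ and $(S^2,V^2)$ be normal $\mathbb{Q}$-VASR abstractions of equal concrete dimension. Then the $\mathbb{Q}$-VASR abstraction $(S,V)$ computed by the join algorithm described in the context is normal and is a least upper bound of $(S^1,V^1)$ and $(S^2,V^2)$ with respect to $\preceq$.
   Context: A $\mathbb{Q}$-VASR of dimension $d$ is a finite set $V\subseteq\{0,1\}^d\times\mathbb{Q}^d$ of transformers $(\vec r,\vec a)$; $\vec u\to_V\vec v$ iff $\vec v=\vec r*\vec u+\vec a$ for some $(\vec r,\vec a)\in V$ ($*$ pointwise product). For transition systems on $\mathbb{Q}^n,\mathbb{Q}^m$, a linear simulation $A\Vdash_S B$ is $S\in\mathbb{Q}^{m\times n}$ with $\vec u\to_A\vec v\Rightarrow S\vec u\to_BS\vec v$. A $\mathbb{Q}$-VASR abstraction is a pair $(S,V)$ with $S\in\mathbb{Q}^{d\times n}$ and $V$ a $d$-dimensional $\mathbb{Q}$-VASR ($n$ = concrete dimension, $d$ = abstract dimension). Preorder: $(S^1,V^1)\preceq(S^2,V^2)$ (abstract dimensions $d,e$) iff there exists $T\in\mathbb{Q}^{e\times d}$ with $V^1\Vdash_TV^2$ and $TS^1=S^2$. An upper bound of two abstractions is an abstraction $\succeq$ both; a least upper bound is an upper bound $\preceq$ every upper bound. Coherence: dimensions $i,j$ of $V$ are coherent if $r_i=r_j$ for all $(\vec r,\vec a)\in V$; equivalence classes are coherence classes. For a coherence class $C=\{c_1<\dots<c_k\}$ of a $d$-dimensional $V$, $\pi_C$ is the $k\times d$ matrix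 with rows $\vec e_{c_1},\dots,\vec e_{c_k}$. A row vector or matrix is coherent w.r.t. $V$ if each row has nonzero entries only in columns of one coherence class. $(S,V)$ is normal if there is no nonzero row vector $\vec z$ coherent w.r.t. $V$ with $\vec zS=0$. For $T$ coherent w.r.t. $V$ with no zero rows, $\mathrm{image}(V,T)=\{(T\rhd\vec r,T\vec a):(\vec r,\vec a)\in V\}$, with $(T\rhd\vec r)_i=r_j$ for any $j$ with $T_{ij}\neq0$. For matrices $A,B$ with equal numbers of columns, $\mathit{pushout}(A,B)$ returns $(U^1,U^2)$ whose row pairs $(U^1_i,U^2_i)$ form a basis of the vector space $\{(\vec u^1,\vec u^2):\vec u^1A=\vec u^2B\}$. Join algorithm on input $(S^1,V^1),(S^2,V^2)$: start with empty matrices $S,T^1,T^2$. For each coherence class $C^1$ of $V^1$ and each coherence class $C^2$ of $V^2$: compute $(U^1,U^2)=\mathit{pushout}(\pi_{C^1}S^1,\pi_{C^2}S^2)$; append the rows of $U^1\pi_{C^1}S^1$ to $S$, the rows of $U^1\pi_{C^1}$ to $T^1$, and the rows of $U^2\pi_{C^2}$ to $T^2$. Then set $V=\mathrm{image}(V^1,T^1)\cup\mathrm{image}(V^2,T^2)$ and return $(S,V)$. *)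

theory Defs
  imports "Jordan_Normal_Form.Matrix"
begin

text \<open>Vectors/matrices over the rationals are Jordan_Normal_Form's rat vec / rat mat.
  A row vector z times a matrix A (written z A in the paper) is rendered as
  transpose_mat A *v z.\<close>

type_synonym qvasr = "(rat vec \<times> rat vec) set"

definition qvasr :: "nat \<Rightarrow> qvasr \<Rightarrow> bool" where
  "qvasr d V \<longleftrightarrow> finite V \<and>
     (\<forall>(r,a)\<in>V. r \<in> carrier_vec d \<and> a \<in> carrier_vec d \<and> (\<forall>i<d. r $ i = 0 \<or> r $ i = 1))"

definition qvasr_step :: "qvasr \<Rightarrow> rat vec \<Rightarrow> rat vec \<Rightarrow> bool" where
  "qvasr_step V u v \<longleftrightarrow>
     (\<exists>(r,a)\<in>V. dim_vec u = dim_vec r \<and> v = vec (dim_vec r) (\<lambda>i. r $ i * u $ i) + a)"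

definition lin_sim ::
  "nat \<Rightarrow> (rat vec \<Rightarrow> rat vec \<Rightarrow> bool) \<Rightarrow> rat mat \<Rightarrow> (rat vec \<Rightarrow> rat vec \<Rightarrow> bool) \<Rightarrow> bool" where
  "lin_sim n A S B \<longleftrightarrow> dim_col S = n \<and>
     (\<forall>u v. u \<in> carrier_vec n \<longrightarrow> v \<in> carrier_vec n \<longrightarrow> A u v \<longrightarrow> B (S *\<^sub>v u) (S *\<^sub>v v))"

definition is_abs :: "nat \<Rightarrow> rat mat \<Rightarrow> qvasr \<Rightarrow> bool" where
  "is_abs n S V \<longleftrightarrow> dim_col S = n \<and> qvasr (dim_row S) V"

definition abs_le :: "rat mat \<times> qvasr \<Rightarrow> rat mat \<times> qvasr \<Rightarrow> bool" where
  "abs_le A B \<longleftrightarrow> (case A of (S1,V1) \<Rightarrow> case B of (S2,V2) \<Rightarrow>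
     (\<exists>T \<in> carrier_mat (dim_row S2) (dim_row S1).
        lin_sim (dim_row S1) (qvasr_step V1) T (qvasr_step V2) \<and> T * S1 = S2))"

definition is_upper_bound :: "nat \<Rightarrow> rat mat \<times> qvasr \<Rightarrow> rat mat \<times> qvasr \<Rightarrow> rat mat \<times> qvasr \<Rightarrow> bool" where
  "is_upper_bound n A B C \<longleftrightarrow> is_abs n (fst C) (snd C) \<and> abs_le A C \<and> abs_le B C"

definition abs_lub :: "nat \<Rightarrow> rat mat \<times> qvasr \<Rightarrow> rat mat \<times> qvasr \<Rightarrow> rat mat \<times> qvasr \<Rightarrow> bool" where
  "abs_lub n A B C \<longleftrightarrow> is_upper_bound n A B C \<and>
     (\<forall>C'. is_upper_bound n A B C' \<longrightarrow> abs_le C C')"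

definition coherent_dims :: "qvasr \<Rightarrow> nat \<Rightarrow> nat \<Rightarrow> bool" where
  "coherent_dims V i j \<longleftrightarrow> (\<forall>(r,a)\<in>V. r $ i = r $ j)"

definition coh_classes :: "nat \<Rightarrow> qvasr \<Rightarrow> nat set set" where
  "coh_classes d V = {{j. j < d \<and> coherent_dims V i j} | i. i < d}"

definition coherent_row :: "nat \<Rightarrow> qvasr \<Rightarrow> rat vec \<Rightarrow> bool" where
  "coherent_row d V z \<longleftrightarrow> (\<exists>C\<in>coh_classes d V. \<forall>j<d. z $ j \<noteq> 0 \<longrightarrow> j \<in> C)"

definition normal_abs :: "rat mat \<Rightarrow> qvasr \<Rightarrow> bool" where
  "normal_abs S V \<longleftrightarrow> \<not> (\<exists>z \<in> carrier_vec (dim_row S).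
      z \<noteq> 0\<^sub>v (dim_row S) \<and> coherent_row (dim_row S) V z \<and>
      transpose_mat S *\<^sub>v z = 0\<^sub>v (dim_col S))"

definition pi_mat :: "nat \<Rightarrow> nat set \<Rightarrow> rat mat" where
  "pi_mat d C = mat_of_rows d (map (unit_vec d) (sorted_list_of_set C))"

definition vasr_image :: "qvasr \<Rightarrow> rat mat \<Rightarrow> qvasr" where
  "vasr_image V T = {(vec (dim_row T) (\<lambda>i. r $ (SOME j. j < dim_col T \<and> T $$ (i,j) \<noteq> 0)),
                      T *\<^sub>v a) | r a. (r,a) \<in> V}"

text \<open>Specification of pushout(A,B) = (U1,U2): the row pairs (U1_i,U2_i) form a basis of
  {(u1,u2). u1 A = u2 B}, written out: they are linearly independent and span that space.\<close>
definition is_pushout :: "rat mat \<Rightarrow> rat mat \<Rightarrow> rat mat \<Rightarrow> rat mat \<Rightarrow> bool" where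
  "is_pushout A B U1 U2 \<longleftrightarrow>
     dim_col A = dim_col B \<and>
     U1 \<in> carrier_mat (dim_row U1) (dim_row A) \<and> U2 \<in> carrier_mat (dim_row U1) (dim_row B) \<and>
     (\<forall>x \<in> carrier_vec (dim_row U1).
        transpose_mat U1 *\<^sub>v x = 0\<^sub>v (dim_row A) \<and> transpose_mat U2 *\<^sub>v x = 0\<^sub>v (dim_row B)
        \<longrightarrow> x = 0\<^sub>v (dim_row U1)) \<and>
     (\<forall>u1 \<in> carrier_vec (dim_row A). \<forall>u2 \<in> carrier_vec (dim_row B).
        transpose_mat A *\<^sub>v u1 = transpose_mat B *\<^sub>v u2 \<longleftrightarrow>
        (\<exists>x \<in> carrier_vec (dim_row U1). u1 = transpose_mat U1 *\<^sub>v x \<and> u2 = transpose_mat U2 *\<^sub>v x))"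

text \<open>(S,V) is a possible output of the join algorithm on (S1,V1),(S2,V2): for some enumeration
  ps of all pairs of coherence classes (C1,C2) (each exactly once) and some valid pushout
  results Us, S, T1, T2 are the row-wise concatenations and V = image(V1,T1) u image(V2,T2).\<close>
definition join_result :: "rat mat \<Rightarrow> qvasr \<Rightarrow> rat mat \<Rightarrow> qvasr \<Rightarrow> rat mat \<Rightarrow> qvasr \<Rightarrow> bool" where
  "join_result S1 V1 S2 V2 S V \<longleftrightarrow>
     (\<exists>ps Us. distinct ps \<and>
        set ps = coh_classes (dim_row S1) V1 \<times> coh_classes (dim_row S2) V2 \<and>
        length Us = length ps \<and>
        (\<forall>k < length ps.
           is_pushout (pi_mat (dim_row S1) (fst (ps ! k)) * S1)
                      (pi_mat (dim_row S2) (snd (ps ! k)) * S2)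
                      (fst (Us ! k)) (snd (Us ! k))) \<and>
        S = mat_of_rows (dim_col S1)
              (concat (map (\<lambda>((C1,C2),(U1,U2)). rows (U1 * pi_mat (dim_row S1) C1 * S1)) (zip ps Us))) \<and>
        V = vasr_image V1 (mat_of_rows (dim_row S1)
              (concat (map (\<lambda>((C1,C2),(U1,U2)). rows (U1 * pi_mat (dim_row S1) C1)) (zip ps Us))))
          \<union> vasr_image V2 (mat_of_rows (dim_row S2)
              (concat (map (\<lambda>((C1,C2),(U1,U2)). rows (U2 * pi_mat (dim_row S2) C2)) (zip ps Us)))))"

end

theory Submission
  imports Defs "HOL-Computational_Algebra.Polynomial"
begin

lemma index_mult_mat_vec_sum:
  "M \<in> carrier_mat m d \<Longrightarrow> i < m \<Longrightarrow> x \<in> carrier_vec d \<Longrightarrow> (M *\<^sub>v x) $ i = (\<Sum>j<d. M $$ (i, j) * x $ j)"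
  by (simp add: scalar_prod_def lessThan_atLeast0)

lemma nonzero_vec_index:
  assumes "w \<in> carrier_vec d" "w \<noteq> 0\<^sub>v d"
  obtains j where "j < d" "w $ j \<noteq> 0"
proof -
  have "\<not> (\<forall>j<d. w $ j = 0)"
  proof
    assume "\<forall>j<d. w $ j = 0"
    then have "w = 0\<^sub>v d" using assms(1) by (intro eq_vecI) auto
    with assms(2) show False ..
  qed
  then show ?thesis using that by blast
qed

lemma mult_mat_vec_zero:
  fixes A :: "'a::semiring_0 mat"
  shows "A \<in> carrier_mat nr nc \<Longrightarrow> A *\<^sub>v 0\<^sub>v nc = 0\<^sub>v nr"
  by (intro eq_vecI) auto

lemma row_mult_transpose:
  fixes A B :: "'a::comm_semiring_0 mat"
  assumes "A \<in> carrier_mat m d" "B \<in> carrier_mat d n" "i < m"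
  shows "row (A * B) i = transpose_mat B *\<^sub>v row A i"
proof (rule eq_vecI)
  fix j assume "j < dim_vec (transpose_mat B *\<^sub>v row A i)"
  then have j: "j < n" using assms by simp
  have "row (A * B) i $ j = row A i \<bullet> col B j" using assms j by simp
  also have "\<dots> = col B j \<bullet> row A i" using assms by (intro comm_scalar_prod[where n = d]) auto
  also have "\<dots> = (transpose_mat B *\<^sub>v row A i) $ j" using assms j by simp
  finally show "row (A * B) i $ j = (transpose_mat B *\<^sub>v row A i) $ j" .
qed (use assms in simp)

lemma transpose_mult_mat_vec:
  fixes A B :: "'a::comm_semiring_0 mat"
  assumes "A \<in> carrier_mat m d" "B \<in> carrier_mat d n" "u \<in> carrier_vec m"
  shows "transpose_mat (A * B) *\<^sub>v u = transpose_mat B *\<^sub>v (transpose_mat A *\<^sub>v u)"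
  using assms by (simp add: transpose_mult assoc_mult_mat_vec[of _ n d _ m])

lemma transpose_mat_mult_unit_vec:
  fixes U :: "'a::semiring_1 mat"
  shows "l < dim_row U \<Longrightarrow> transpose_mat U *\<^sub>v unit_vec (dim_row U) l = row U l"
  by (intro eq_vecI) (auto simp: scalar_prod_right_unit)

lemma mat_of_rows_mult_eq:
  fixes T R :: "'a::comm_semiring_0 mat"
  assumes T: "T \<in> carrier_mat N d" and R: "R \<in> carrier_mat (length ys) d"
    and ys: "\<And>i. i < length ys \<Longrightarrow> ys ! i \<in> carrier_vec N \<and> transpose_mat T *\<^sub>v ys ! i = row R i"
  shows "mat_of_rows N ys * T = R"
proof (rule eq_rowI)
  fix i assume "i < dim_row R"
  then have i: "i < length ys" using R by simp
  have "row (mat_of_rows N ys * T) i = transpose_mat T *\<^sub>v row (mat_of_rows N ys) i"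
    using T i by (intro row_mult_transpose) auto
  then show "row (mat_of_rows N ys * T) i = row R i"
    using ys[OF i] i by (simp add: mat_of_rows_row)
qed (use T R in simp_all)

lemma mult_mat_vec_hadamard:
  fixes T :: "'a::comm_semiring_0 mat"
  assumes T: "T \<in> carrier_mat N d" and u: "u \<in> carrier_vec d"
    and coh: "\<And>i j. i < N \<Longrightarrow> j < d \<Longrightarrow> T $$ (i, j) \<noteq> 0 \<Longrightarrow> f j = g i"
  shows "T *\<^sub>v vec d (\<lambda>j. f j * u $ j) = vec N (\<lambda>i. g i * (T *\<^sub>v u) $ i)"
proof (rule eq_vecI)
  fix i assume "i < dim_vec (vec N (\<lambda>i. g i * (T *\<^sub>v u) $ i))"
  then have i: "i < N" by simp
  have "(T *\<^sub>v vec d (\<lambda>j. f j * u $ j)) $ i = (\<Sum>j<d. T $$ (i, j) * (f j * u $ j))"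
    using index_mult_mat_vec_sum[OF T i, of "vec d (\<lambda>j. f j * u $ j)"] by simp
  also have "\<dots> = (\<Sum>j<d. g i * (T $$ (i, j) * u $ j))"
  proof (intro sum.cong refl)
    fix j assume "j \<in> {..<d}"
    then show "T $$ (i, j) * (f j * u $ j) = g i * (T $$ (i, j) * u $ j)"
      using coh[OF i, of j] by (cases "T $$ (i, j) = 0") (auto simp: algebra_simps)
  qed
  also have "\<dots> = g i * (T *\<^sub>v u) $ i"
    by (simp add: index_mult_mat_vec_sum[OF T i u] sum_distrib_left)
  finally show "(T *\<^sub>v vec d (\<lambda>j. f j * u $ j)) $ i = vec N (\<lambda>i. g i * (T *\<^sub>v u) $ i) $ i"
    using i by simp
qed (use T in auto)

section \<open>Linear simulations between Q-VASRs\<close>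

lemma sum_powers_infinite_roots_imp_zero:
  fixes c :: "nat \<Rightarrow> 'a::idom"
  assumes "infinite {x. (\<Sum>i\<le>n. c i * x ^ i) = 0}" and "i \<le> n"
  shows "c i = 0"
proof -
  define p where "p = (\<Sum>i\<le>n. monom (c i) i)"
  have "{x. poly p x = 0} = {x. (\<Sum>i\<le>n. c i * x ^ i) = 0}"
    by (simp add: p_def poly_sum poly_monom)
  then have "p = 0"
    using assms(1) poly_roots_finite by metis
  then show ?thesis
    using coeff_sum_monom[OF assms(2), of c] by (simp add: p_def)
qed

lemma qvasr_memD:
  "qvasr d V \<Longrightarrow> (r, a) \<in> V \<Longrightarrow> r \<in> carrier_vec d \<and> a \<in> carrier_vec d \<and> (\<forall>i<d. r $ i = 0 \<or> r $ i = 1)"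
  unfolding qvasr_def by blast

lemma qvasr_Un: "qvasr d A \<Longrightarrow> qvasr d B \<Longrightarrow> qvasr d (A \<union> B)"
  unfolding qvasr_def by blast

lemma lin_sim_Un:
  "lin_sim n (qvasr_step A) T W \<Longrightarrow> lin_sim n (qvasr_step B) T W \<Longrightarrow> lin_sim n (qvasr_step (A \<union> B)) T W"
  unfolding lin_sim_def qvasr_step_def by blast

lemma lin_sim_transformer:
  assumes sim: "lin_sim d (qvasr_step V) M (qvasr_step V')" and V': "qvasr m V'"
    and M: "M \<in> carrier_mat m d" and ra: "(r, a) \<in> V" "r \<in> carrier_vec d" "a \<in> carrier_vec d"
  obtains r' a' where "(r', a') \<in> V'" "M *\<^sub>v a = a'"
    "\<And>i j. i < m \<Longrightarrow> j < d \<Longrightarrow> M $$ (i, j) \<noteq> 0 \<Longrightarrow> r' $ i = r $ j"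
proof -
  define u :: "rat \<Rightarrow> rat vec" where "u t = vec d (\<lambda>j. t ^ Suc j)" for t
  define v where "v t = vec d (\<lambda>j. r $ j * u t $ j) + a" for t
  have "\<exists>p\<in>V'. M *\<^sub>v v t = vec m (\<lambda>i. fst p $ i * (M *\<^sub>v u t) $ i) + snd p" for t
  proof -
    have "qvasr_step V (u t) (v t)"
      unfolding qvasr_step_def v_def using ra by (intro bexI[of _ "(r, a)"]) (auto simp: u_def)
    then have "qvasr_step V' (M *\<^sub>v u t) (M *\<^sub>v v t)"
      using sim ra by (auto simp: lin_sim_def u_def v_def)
    then obtain r0 a0 where "(r0, a0) \<in> V'" "dim_vec (M *\<^sub>v u t) = dim_vec r0"
      "M *\<^sub>v v t = vec (dim_vec r0) (\<lambda>i. r0 $ i * (M *\<^sub>v u t) $ i) + a0"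
      unfolding qvasr_step_def by blast
    then show ?thesis using M by (intro bexI[of _ "(r0, a0)"]) auto
  qed
  then obtain f where f: "\<And>t. f t \<in> V'"
    "\<And>t. M *\<^sub>v v t = vec m (\<lambda>i. fst (f t) $ i * (M *\<^sub>v u t) $ i) + snd (f t)"
    by metis
  have "finite (range f)"
    using V' f(1) unfolding qvasr_def by (meson finite_subset image_subsetI)
  then obtain t0 where t0: "infinite {t. f t = f t0}"
    using pigeonhole_infinite[of UNIV f] infinite_UNIV_char_0 by auto
  obtain r' a' where ra': "f t0 = (r', a')" by fastforce
  have a': "a' \<in> carrier_vec m"
    using qvasr_memD[OF V'] f(1)[of t0] ra' by auto
  define c where "c i = case_nat ((M *\<^sub>v a) $ i - a' $ i) (\<lambda>j. M $$ (i, j) * (r $ j - r' $ i))" for i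
  have c_zero: "c i k = 0" if "i < m" "k \<le> d" for i k
  proof (rule sum_powers_infinite_roots_imp_zero[OF _ \<open>k \<le> d\<close>])
    have "(\<Sum>k\<le>d. c i k * t ^ k) = 0" if "f t = (r', a')" for t
    proof -
      have "(M *\<^sub>v v t) $ i = (\<Sum>j<d. M $$ (i, j) * v t $ j)"
        using ra by (intro index_mult_mat_vec_sum[OF M \<open>i < m\<close>]) (simp add: v_def)
      also have "\<dots> = (\<Sum>j<d. M $$ (i, j) * r $ j * t ^ Suc j) + (M *\<^sub>v a) $ i"
        using ra by (simp add: index_mult_mat_vec_sum[OF M \<open>i < m\<close>] v_def u_def sum.distrib algebra_simps)
      finally have lhs: "(M *\<^sub>v v t) $ i = \<dots>" .
      have "(M *\<^sub>v u t) $ i = (\<Sum>j<d. M $$ (i, j) * t ^ Suc j)"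
        by (simp add: index_mult_mat_vec_sum[OF M \<open>i < m\<close>] u_def)
      then have "(M *\<^sub>v v t) $ i = r' $ i * (\<Sum>j<d. M $$ (i, j) * t ^ Suc j) + a' $ i"
        using f(2)[of t] that M a' \<open>i < m\<close> by simp
      with lhs show ?thesis
        by (simp add: c_def sum.atMost_shift sum_distrib_left sum_subtractf algebra_simps)
    qed
    then show "infinite {t. (\<Sum>k\<le>d. c i k * t ^ k) = 0}"
      using t0 ra' by (metis (mono_tags, lifting) infinite_super mem_Collect_eq subsetI)
  qed
  show thesis
  proof (rule that)
    show "(r', a') \<in> V'" using f(1)[of t0] ra' by simp
    show "M *\<^sub>v a = a'"
      using c_zero[of _ 0] a' M by (intro eq_vecI) (auto simp: c_def)
  next
    fix i j assume "i < m" "j < d" "M $$ (i, j) \<noteq> 0"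
    then show "r' $ i = r $ j" using c_zero[of i "Suc j"] by (simp add: c_def)
  qed
qed

definition coherent_vec :: "qvasr \<Rightarrow> rat vec \<Rightarrow> bool" where
  "coherent_vec V w \<longleftrightarrow>
     (\<forall>j<dim_vec w. \<forall>j'<dim_vec w. w $ j \<noteq> 0 \<longrightarrow> w $ j' \<noteq> 0 \<longrightarrow> coherent_dims V j j')"

definition coherent_mat :: "qvasr \<Rightarrow> rat mat \<Rightarrow> bool" where
  "coherent_mat V T \<longleftrightarrow> (\<forall>i<dim_row T. coherent_vec V (row T i))"

lemma coherent_matI:
  assumes "\<And>i j j'. i < dim_row T \<Longrightarrow> j < dim_col T \<Longrightarrow> j' < dim_col T \<Longrightarrow>
    T $$ (i, j) \<noteq> 0 \<Longrightarrow> T $$ (i, j') \<noteq> 0 \<Longrightarrow> coherent_dims V j j'"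
  shows "coherent_mat V T"
  using assms unfolding coherent_mat_def coherent_vec_def by simp

lemma coherent_matD:
  "coherent_mat V T \<Longrightarrow> i < dim_row T \<Longrightarrow> j < dim_col T \<Longrightarrow> j' < dim_col T \<Longrightarrow>
    T $$ (i, j) \<noteq> 0 \<Longrightarrow> T $$ (i, j') \<noteq> 0 \<Longrightarrow> coherent_dims V j j'"
  unfolding coherent_mat_def coherent_vec_def by simp

lemma lin_sim_coherent_mat:
  assumes sim: "lin_sim d (qvasr_step V) M (qvasr_step V')" and V: "qvasr d V" and V': "qvasr m V'"
    and M: "M \<in> carrier_mat m d"
  shows "coherent_mat V M"
proof (rule coherent_matI)
  fix i j j' assume ij: "i < dim_row M" "j < dim_col M" "j' < dim_col M"
    "M $$ (i, j) \<noteq> 0" "M $$ (i, j') \<noteq> 0"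
  show "coherent_dims V j j'"
    unfolding coherent_dims_def
  proof clarify
    fix r a assume ra: "(r, a) \<in> V"
    obtain r' where "\<And>i j. i < m \<Longrightarrow> j < d \<Longrightarrow> M $$ (i, j) \<noteq> 0 \<Longrightarrow> r' $ i = r $ j"
      using lin_sim_transformer[OF sim V' M ra] qvasr_memD[OF V ra] by metis
    then show "r $ j = r $ j'" using ij M by (metis carrier_matD)
  qed
qed

section \<open>Coherence classes and normality\<close>

lemma coh_classes_subset: "C \<in> coh_classes d V \<Longrightarrow> C \<subseteq> {..<d}"
  unfolding coh_classes_def by auto

lemma coh_classes_finite: "C \<in> coh_classes d V \<Longrightarrow> finite C"
  using finite_subset[OF coh_classes_subset] by blast

lemma coh_classes_coherent:
  "C \<in> coh_classes d V \<Longrightarrow> j \<in> C \<Longrightarrow> j' \<in> C \<Longrightarrow> coherent_dims V j j'"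
  unfolding coh_classes_def coherent_dims_def by fastforce

lemma coh_classes_eq:
  "C \<in> coh_classes d V \<Longrightarrow> C' \<in> coh_classes d V \<Longrightarrow> j \<in> C \<Longrightarrow> j' \<in> C' \<Longrightarrow> coherent_dims V j j'
    \<Longrightarrow> C = C'"
  unfolding coh_classes_def coherent_dims_def by fastforce

lemma coherent_rowI:
  assumes "w \<in> carrier_vec d" "w \<noteq> 0\<^sub>v d" and coh: "coherent_vec V w"
  shows "coherent_row d V w"
proof -
  obtain j0 where j0: "j0 < d" "w $ j0 \<noteq> 0"
    using nonzero_vec_index[OF assms(1,2)] .
  have C0: "{j. j < d \<and> coherent_dims V j0 j} \<in> coh_classes d V"
    unfolding coh_classes_def using j0(1) by blast
  show ?thesis
    unfolding coherent_row_def using coh j0 assms(1) unfolding coherent_vec_def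
    by (intro bexI[OF _ C0]) auto
qed

lemma normal_absD:
  "normal_abs S V \<Longrightarrow> coherent_row (dim_row S) V w \<Longrightarrow> w \<in> carrier_vec (dim_row S)
    \<Longrightarrow> transpose_mat S *\<^sub>v w = 0\<^sub>v (dim_col S) \<Longrightarrow> w = 0\<^sub>v (dim_row S)"
  unfolding normal_abs_def by blast

lemma normal_abs_coherent_zero:
  assumes normal: "normal_abs S V" and w: "w \<in> carrier_vec (dim_row S)" and coh: "coherent_vec V w"
    and zero: "transpose_mat S *\<^sub>v w = 0\<^sub>v (dim_col S)"
  shows "w = 0\<^sub>v (dim_row S)"
proof (rule ccontr)
  assume "w \<noteq> 0\<^sub>v (dim_row S)"
  then show False
    using normal_absD[OF normal coherent_rowI[OF w _ coh] w zero] by blast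
qed

context
  fixes d :: nat and C :: "nat set"
  assumes C: "finite C" "C \<subseteq> {..<d}"
begin

lemma pi_mat_carrier: "pi_mat d C \<in> carrier_mat (card C) d"
  unfolding pi_mat_def using mat_of_rows_carrier(1) by (metis length_map length_sorted_list_of_set)

lemma sorted_list_of_set_nth_in:
  "c < card C \<Longrightarrow> sorted_list_of_set C ! c \<in> C"
  using C by (metis nth_mem sorted_list_of_set(1) length_sorted_list_of_set)

lemma pi_mat_index:
  assumes "c < card C" "j < d"
  shows "pi_mat d C $$ (c, j) = (if sorted_list_of_set C ! c = j then 1 else 0)"
proof -
  have "sorted_list_of_set C ! c < d"
    using C sorted_list_of_set_nth_in[OF assms(1)] by auto
  then show ?thesis
    unfolding pi_mat_def using assms by (simp add: mat_of_rows_index)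
qed

lemma pi_mat_mult_vec:
  assumes "w \<in> carrier_vec d" "c < card C"
  shows "(pi_mat d C *\<^sub>v w) $ c = w $ (sorted_list_of_set C ! c)"
proof -
  have "sorted_list_of_set C ! c < d"
    using C sorted_list_of_set_nth_in[OF assms(2)] by auto
  then show ?thesis
    unfolding pi_mat_def using C assms by (simp add: mat_of_rows_row scalar_prod_left_unit)
qed

lemma pi_mat_transpose_mult_vec:
  assumes "u \<in> carrier_vec (card C)" "j < d"
  shows "(transpose_mat (pi_mat d C) *\<^sub>v u) $ j
    = (\<Sum>c<card C. if sorted_list_of_set C ! c = j then u $ c else 0)"
proof -
  have "(transpose_mat (pi_mat d C) *\<^sub>v u) $ j = (\<Sum>c<card C. transpose_mat (pi_mat d C) $$ (j, c) * u $ c)"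
    using assms pi_mat_carrier by (intro index_mult_mat_vec_sum) auto
  also have "\<dots> = (\<Sum>c<card C. if sorted_list_of_set C ! c = j then u $ c else 0)"
    using assms pi_mat_carrier by (intro sum.cong refl) (simp add: pi_mat_index)
  finally show ?thesis .
qed

lemma pi_mat_transpose_support:
  "u \<in> carrier_vec (card C) \<Longrightarrow> j < d \<Longrightarrow> (transpose_mat (pi_mat d C) *\<^sub>v u) $ j \<noteq> 0 \<Longrightarrow> j \<in> C"
  using sorted_list_of_set_nth_in by (fastforce simp: pi_mat_transpose_mult_vec intro: sum.neutral)

lemma row_pi_mat: "c < card C \<Longrightarrow> row (pi_mat d C) c = unit_vec d (sorted_list_of_set C ! c)"
  unfolding pi_mat_def using C by (simp add: mat_of_rows_row)

lemma pi_mat_mult_transpose: "pi_mat d C * transpose_mat (pi_mat d C) = 1\<^sub>m (card C)"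
proof (rule eq_matI)
  fix c c' assume "c < dim_row (1\<^sub>m (card C))" "c' < dim_col (1\<^sub>m (card C))"
  then have cc': "c < card C" "c' < card C" by auto
  then have "sorted_list_of_set C ! c < d" "sorted_list_of_set C ! c' < d"
    using C sorted_list_of_set_nth_in by auto
  then have "(pi_mat d C * transpose_mat (pi_mat d C)) $$ (c, c')
      = (if sorted_list_of_set C ! c' = sorted_list_of_set C ! c then 1 else 0)"
    using cc' pi_mat_carrier by (simp add: row_pi_mat scalar_prod_left_unit)
  also have "\<dots> = 1\<^sub>m (card C) $$ (c, c')"
    using cc' C by (simp add: nth_eq_iff_index_eq)
  finally show "(pi_mat d C * transpose_mat (pi_mat d C)) $$ (c, c') = 1\<^sub>m (card C) $$ (c, c')" .
qed (use pi_mat_carrier in auto)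

lemma pi_mat_transpose_inj:
  assumes "u \<in> carrier_vec (card C)" "transpose_mat (pi_mat d C) *\<^sub>v u = 0\<^sub>v d"
  shows "u = 0\<^sub>v (card C)"
proof -
  have "u = (pi_mat d C * transpose_mat (pi_mat d C)) *\<^sub>v u"
    using assms(1) by (simp add: pi_mat_mult_transpose)
  also have "\<dots> = pi_mat d C *\<^sub>v 0\<^sub>v d"
    using assms pi_mat_carrier by (metis assoc_mult_mat_vec transpose_carrier_mat)
  also have "\<dots> = 0\<^sub>v (card C)"
    by (rule mult_mat_vec_zero[OF pi_mat_carrier])
  finally show ?thesis .
qed

lemma pi_mat_transpose_pi_mat:
  assumes w: "w \<in> carrier_vec d" and supp: "\<And>j. j < d \<Longrightarrow> w $ j \<noteq> 0 \<Longrightarrow> j \<in> C"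
  shows "transpose_mat (pi_mat d C) *\<^sub>v (pi_mat d C *\<^sub>v w) = w"
proof (rule eq_vecI)
  fix j assume "j < dim_vec w"
  then have j: "j < d" using w by simp
  have bij: "bij_betw ((!) (sorted_list_of_set C)) {..<card C} C"
    using C by (intro bij_betw_nth) auto
  have "(transpose_mat (pi_mat d C) *\<^sub>v (pi_mat d C *\<^sub>v w)) $ j
      = (\<Sum>c<card C. if sorted_list_of_set C ! c = j then (pi_mat d C *\<^sub>v w) $ c else 0)"
    using w pi_mat_carrier j by (intro pi_mat_transpose_mult_vec) auto
  also have "\<dots> = (\<Sum>c<card C. if sorted_list_of_set C ! c = j then w $ (sorted_list_of_set C ! c) else 0)"
    using w by (intro sum.cong) (auto simp: pi_mat_mult_vec)
  also have "\<dots> = (\<Sum>j'\<in>C. if j' = j then w $ j' else 0)"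
    by (rule sum.reindex_bij_betw[OF bij])
  also have "\<dots> = w $ j"
    using C supp[OF j] by auto
  finally show "(transpose_mat (pi_mat d C) *\<^sub>v (pi_mat d C *\<^sub>v w)) $ j = w $ j" .
qed (use w pi_mat_carrier in auto)

end

lemma normal_abs_class_zero:
  assumes normal: "normal_abs S V" and C: "C \<in> coh_classes (dim_row S) V" and u: "u \<in> carrier_vec (card C)"
    and zero: "transpose_mat S *\<^sub>v (transpose_mat (pi_mat (dim_row S) C) *\<^sub>v u) = 0\<^sub>v (dim_col S)"
  shows "u = 0\<^sub>v (card C)"
proof -
  note Cd = coh_classes_finite[OF C] coh_classes_subset[OF C]
  have w: "transpose_mat (pi_mat (dim_row S) C) *\<^sub>v u \<in> carrier_vec (dim_row S)"
    using pi_mat_carrier[OF Cd] u by simp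
  have "coherent_row (dim_row S) V (transpose_mat (pi_mat (dim_row S) C) *\<^sub>v u)"
    if "transpose_mat (pi_mat (dim_row S) C) *\<^sub>v u \<noteq> 0\<^sub>v (dim_row S)"
    unfolding coherent_row_def using pi_mat_transpose_support[OF Cd u] C by blast
  then have "transpose_mat (pi_mat (dim_row S) C) *\<^sub>v u = 0\<^sub>v (dim_row S)"
    using normal_absD[OF normal _ w zero] by blast
  then show ?thesis
    by (rule pi_mat_transpose_inj[OF Cd u])
qed

section \<open>Images of Q-VASRs\<close>

definition pivot :: "rat mat \<Rightarrow> nat \<Rightarrow> nat" where
  "pivot T i = (SOME j. j < dim_col T \<and> T $$ (i, j) \<noteq> 0)"

lemma pivot_nonzero: "\<exists>j<dim_col T. T $$ (i, j) \<noteq> 0 \<Longrightarrow> pivot T i < dim_col T \<and> T $$ (i, pivot T i) \<noteq> 0"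
  unfolding pivot_def by (rule someI_ex) simp

lemma vasr_image_pivot:
  "vasr_image V T = (\<lambda>(r, a). (vec (dim_row T) (\<lambda>i. r $ pivot T i), T *\<^sub>v a)) ` V"
  unfolding vasr_image_def pivot_def by force

lemma qvasr_step_vasr_imageE:
  assumes "qvasr_step (vasr_image V T) u v"
  obtains r a where "(r, a) \<in> V" "u \<in> carrier_vec (dim_row T)"
    "v = vec (dim_row T) (\<lambda>i. r $ pivot T i * u $ i) + T *\<^sub>v a"
proof -
  from assms obtain r'' a'' where step: "(r'', a'') \<in> vasr_image V T" "dim_vec u = dim_vec r''"
    "v = vec (dim_vec r'') (\<lambda>i. r'' $ i * u $ i) + a''"
    unfolding qvasr_step_def by blast
  obtain r a where ra: "(r, a) \<in> V" "(r'', a'') = (vec (dim_row T) (\<lambda>i. r $ pivot T i), T *\<^sub>v a)"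
    using step(1) unfolding vasr_image_pivot by (auto simp: image_iff)
  then have ra: "(r, a) \<in> V" "r'' = vec (dim_row T) (\<lambda>i. r $ pivot T i)" "a'' = T *\<^sub>v a"
    by simp_all
  show thesis
  proof (rule that[OF ra(1)])
    show "u \<in> carrier_vec (dim_row T)"
      using step(2) ra(2) by (intro carrier_vecI) simp
    have "vec (dim_vec r'') (\<lambda>i. r'' $ i * u $ i) = vec (dim_row T) (\<lambda>i. r $ pivot T i * u $ i)"
      using ra(2) by (intro eq_vecI) auto
    then show "v = vec (dim_row T) (\<lambda>i. r $ pivot T i * u $ i) + T *\<^sub>v a"
      using step(3) ra(3) by simp
  qed
qed

lemma qvasr_vasr_image:
  assumes T: "T \<in> carrier_mat N d" and V: "qvasr d V"
    and rows: "\<And>i. i < N \<Longrightarrow> \<exists>j<d. T $$ (i, j) \<noteq> 0"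
  shows "qvasr N (vasr_image V T)"
proof -
  have "r' \<in> carrier_vec N \<and> a' \<in> carrier_vec N \<and> (\<forall>i<N. r' $ i = 0 \<or> r' $ i = 1)"
    if "(r', a') \<in> vasr_image V T" for r' a'
  proof -
    from that obtain r a where ra: "(r, a) \<in> V" "r' = vec N (\<lambda>i. r $ pivot T i)" "a' = T *\<^sub>v a"
      unfolding vasr_image_pivot using T by auto
    have "pivot T i < d" if "i < N" for i
      using pivot_nonzero[of T i] rows[OF that] T by auto
    then show ?thesis
      using ra qvasr_memD[OF V ra(1)] T by auto
  qed
  moreover have "finite (vasr_image V T)"
    using V unfolding qvasr_def vasr_image_pivot by simp
  ultimately show ?thesis
    unfolding qvasr_def by auto
qed

lemma coherent_dims_vasr_image:
  assumes "coherent_dims (vasr_image V T) i i'" "i < dim_row T" "i' < dim_row T"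
  shows "coherent_dims V (pivot T i) (pivot T i')"
  unfolding coherent_dims_def
proof clarify
  fix r a assume "(r, a) \<in> V"
  then have "(vec (dim_row T) (\<lambda>i. r $ pivot T i), T *\<^sub>v a) \<in> vasr_image V T"
    unfolding vasr_image_pivot by (rule rev_image_eqI) simp
  then show "r $ pivot T i = r $ pivot T i'"
    using assms unfolding coherent_dims_def by fastforce
qed

lemma lin_sim_vasr_image:
  assumes T: "T \<in> carrier_mat N d" and V: "qvasr d V"
    and rows: "\<And>i. i < N \<Longrightarrow> \<exists>j<d. T $$ (i, j) \<noteq> 0" and coh: "coherent_mat V T"
    and sub: "vasr_image V T \<subseteq> W"
  shows "lin_sim d (qvasr_step V) T (qvasr_step W)"
  unfolding lin_sim_def
proof (intro conjI allI impI)
  show "dim_col T = d" using T by simp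
  fix u v assume u: "u \<in> carrier_vec d" and "v \<in> carrier_vec d" and "qvasr_step V u v"
  then obtain r a where ra: "(r, a) \<in> V" "v = vec d (\<lambda>j. r $ j * u $ j) + a"
    unfolding qvasr_step_def by auto
  define \<rho> where "\<rho> = vec N (\<lambda>i. r $ pivot T i)"
  have "(\<rho>, T *\<^sub>v a) \<in> W"
    using sub ra(1) T unfolding vasr_image_pivot \<rho>_def by force
  moreover have "T *\<^sub>v v = vec N (\<lambda>i. \<rho> $ i * (T *\<^sub>v u) $ i) + T *\<^sub>v a"
  proof -
    have "r $ j = \<rho> $ i" if "i < N" "j < d" "T $$ (i, j) \<noteq> 0" for i j
    proof -
      have "pivot T i < d" "T $$ (i, pivot T i) \<noteq> 0"
        using pivot_nonzero[of T i] rows[OF \<open>i < N\<close>] T by auto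
      then have "coherent_dims V j (pivot T i)"
        using coherent_matD[OF coh] that T by auto
      then show ?thesis
        using ra(1) \<open>i < N\<close> unfolding coherent_dims_def \<rho>_def by auto
    qed
    then show ?thesis
      using ra qvasr_memD[OF V ra(1)] T u
      by (simp add: mult_add_distrib_mat_vec[OF T] mult_mat_vec_hadamard[OF T u])
  qed
  ultimately show "qvasr_step W (T *\<^sub>v u) (T *\<^sub>v v)"
    unfolding qvasr_step_def using T by (intro bexI[of _ "(\<rho>, T *\<^sub>v a)"]) (auto simp: \<rho>_def)
qed

lemma lin_sim_vasr_image_factor:
  assumes T: "T \<in> carrier_mat m N" and Tc: "Tc \<in> carrier_mat N d"
    and V: "qvasr d V" and V': "qvasr m V'"
    and rows: "\<And>p. p < N \<Longrightarrow> \<exists>j<d. Tc $$ (p, j) \<noteq> 0"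
    and sim: "lin_sim d (qvasr_step V) (T * Tc) (qvasr_step V')"
    and link: "\<And>i p. i < m \<Longrightarrow> p < N \<Longrightarrow> T $$ (i, p) \<noteq> 0 \<Longrightarrow>
       \<exists>j<d. (T * Tc) $$ (i, j) \<noteq> 0 \<and> (\<forall>j'<d. Tc $$ (p, j') \<noteq> 0 \<longrightarrow> coherent_dims V j j')"
  shows "lin_sim N (qvasr_step (vasr_image V Tc)) T (qvasr_step V')"
  unfolding lin_sim_def
proof (intro conjI allI impI)
  show "dim_col T = N" using T by simp
  fix u v assume u: "u \<in> carrier_vec N" and "v \<in> carrier_vec N"
    and "qvasr_step (vasr_image V Tc) u v"
  then obtain r a where ra: "(r, a) \<in> V" "v = vec N (\<lambda>p. r $ pivot Tc p * u $ p) + Tc *\<^sub>v a"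
    using Tc by (auto elim: qvasr_step_vasr_imageE)
  have r: "r \<in> carrier_vec d" and a: "a \<in> carrier_vec d"
    using qvasr_memD[OF V ra(1)] by auto
  have TTc: "T * Tc \<in> carrier_mat m d" using T Tc by simp
  obtain r' a' where ra': "(r', a') \<in> V'" "(T * Tc) *\<^sub>v a = a'"
    and r': "\<And>i j. i < m \<Longrightarrow> j < d \<Longrightarrow> (T * Tc) $$ (i, j) \<noteq> 0 \<Longrightarrow> r' $ i = r $ j"
    by (rule lin_sim_transformer[OF sim V' TTc ra(1) r a]) blast
  have "r $ pivot Tc p = r' $ i" if ip: "i < m" "p < N" "T $$ (i, p) \<noteq> 0" for i p
  proof -
    obtain j where j: "j < d" "(T * Tc) $$ (i, j) \<noteq> 0"
      and coh: "\<forall>j'<d. Tc $$ (p, j') \<noteq> 0 \<longrightarrow> coherent_dims V j j'"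
      using link[OF ip] by blast
    have "pivot Tc p < d" "Tc $$ (p, pivot Tc p) \<noteq> 0"
      using pivot_nonzero[of Tc p] rows[OF \<open>p < N\<close>] Tc by auto
    then have "r $ j = r $ pivot Tc p"
      using coh ra(1) unfolding coherent_dims_def by auto
    then show ?thesis using r'[OF \<open>i < m\<close> j] by simp
  qed
  then have "T *\<^sub>v vec N (\<lambda>p. r $ pivot Tc p * u $ p) = vec m (\<lambda>i. r' $ i * (T *\<^sub>v u) $ i)"
    by (rule mult_mat_vec_hadamard[OF T u])
  moreover have "T *\<^sub>v (Tc *\<^sub>v a) = a'"
    using ra'(2) assoc_mult_mat_vec[OF T Tc a] by simp
  moreover have "Tc *\<^sub>v a \<in> carrier_vec N"
    using Tc a by simp
  ultimately have "T *\<^sub>v v = vec m (\<lambda>i. r' $ i * (T *\<^sub>v u) $ i) + a'"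
    using ra(2) by (simp add: mult_add_distrib_mat_vec[OF T])
  then show "qvasr_step V' (T *\<^sub>v u) (T *\<^sub>v v)"
    unfolding qvasr_step_def using ra'(1) qvasr_memD[OF V' ra'(1)] T
    by (intro bexI[of _ "(r', a')"]) auto
qed

section \<open>Pushouts\<close>

lemma is_pushoutD:
  assumes "is_pushout A B U1 U2"
  shows is_pushout_dim_col: "dim_col A = dim_col B"
    and is_pushout_dims: "dim_col U1 = dim_row A" "dim_row U2 = dim_row U1" "dim_col U2 = dim_row B"
    and is_pushout_indep: "\<And>x. x \<in> carrier_vec (dim_row U1) \<Longrightarrow> transpose_mat U1 *\<^sub>v x = 0\<^sub>v (dim_row A) \<Longrightarrow>
       transpose_mat U2 *\<^sub>v x = 0\<^sub>v (dim_row B) \<Longrightarrow> x = 0\<^sub>v (dim_row U1)"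
    and is_pushout_iff: "\<And>u1 u2. u1 \<in> carrier_vec (dim_row A) \<Longrightarrow> u2 \<in> carrier_vec (dim_row B) \<Longrightarrow>
       transpose_mat A *\<^sub>v u1 = transpose_mat B *\<^sub>v u2 \<longleftrightarrow>
       (\<exists>x\<in>carrier_vec (dim_row U1). u1 = transpose_mat U1 *\<^sub>v x \<and> u2 = transpose_mat U2 *\<^sub>v x)"
  using assms unfolding is_pushout_def carrier_mat_def by blast+

lemma is_pushout_carrier:
  assumes "is_pushout A B U1 U2"
  shows "U1 \<in> carrier_mat (dim_row U1) (dim_row A)" "U2 \<in> carrier_mat (dim_row U1) (dim_row B)"
  using is_pushout_dims[OF assms] by (auto intro!: carrier_matI)

lemma is_pushout_eq:
  assumes po: "is_pushout A B U1 U2" and x: "x \<in> carrier_vec (dim_row U1)"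
  shows "transpose_mat A *\<^sub>v (transpose_mat U1 *\<^sub>v x) = transpose_mat B *\<^sub>v (transpose_mat U2 *\<^sub>v x)"
proof -
  have u: "transpose_mat U1 *\<^sub>v x \<in> carrier_vec (dim_row A)" "transpose_mat U2 *\<^sub>v x \<in> carrier_vec (dim_row B)"
    using is_pushout_dims[OF po] x by (auto intro!: carrier_vecI)
  show ?thesis
    by (rule is_pushout_iff[OF po u, THEN iffD2]) (use x in blast)
qed

lemma is_pushout_span:
  assumes po: "is_pushout A B U1 U2" and u: "u1 \<in> carrier_vec (dim_row A)" "u2 \<in> carrier_vec (dim_row B)"
    and eq: "transpose_mat A *\<^sub>v u1 = transpose_mat B *\<^sub>v u2"
  obtains x where "x \<in> carrier_vec (dim_row U1)" "u1 = transpose_mat U1 *\<^sub>v x" "u2 = transpose_mat U2 *\<^sub>v x"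
  using is_pushout_iff[OF po u] eq that by blast

lemma is_pushout_sym:
  assumes po: "is_pushout A B U1 U2"
  shows "is_pushout B A U2 U1"
proof -
  have dim: "dim_row U2 = dim_row U1"
    by (rule is_pushout_dims(2)[OF po])
  show ?thesis
    unfolding is_pushout_def dim
  proof (intro conjI ballI impI)
    show "dim_col B = dim_col A"
      using is_pushout_dim_col[OF po] by (rule sym)
    show "U2 \<in> carrier_mat (dim_row U1) (dim_row B)" "U1 \<in> carrier_mat (dim_row U1) (dim_row A)"
      using is_pushout_carrier[OF po] by blast+
  next
    fix x assume "x \<in> carrier_vec (dim_row U1)"
      "transpose_mat U2 *\<^sub>v x = 0\<^sub>v (dim_row B) \<and> transpose_mat U1 *\<^sub>v x = 0\<^sub>v (dim_row A)"
    then show "x = 0\<^sub>v (dim_row U1)" using is_pushout_indep[OF po] by blast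
  next
    fix u2 u1 :: "rat vec" assume u: "u2 \<in> carrier_vec (dim_row B)" "u1 \<in> carrier_vec (dim_row A)"
    have "(transpose_mat B *\<^sub>v u2 = transpose_mat A *\<^sub>v u1) \<longleftrightarrow>
        (transpose_mat A *\<^sub>v u1 = transpose_mat B *\<^sub>v u2)"
      by (rule eq_commute)
    also have "\<dots> \<longleftrightarrow> (\<exists>x\<in>carrier_vec (dim_row U1). u1 = transpose_mat U1 *\<^sub>v x \<and> u2 = transpose_mat U2 *\<^sub>v x)"
      by (rule is_pushout_iff[OF po u(2,1)])
    also have "\<dots> \<longleftrightarrow> (\<exists>x\<in>carrier_vec (dim_row U1). u2 = transpose_mat U2 *\<^sub>v x \<and> u1 = transpose_mat U1 *\<^sub>v x)"
      by blast
    finally show "(transpose_mat B *\<^sub>v u2 = transpose_mat A *\<^sub>v u1) \<longleftrightarrow>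
        (\<exists>x\<in>carrier_vec (dim_row U1). u2 = transpose_mat U2 *\<^sub>v x \<and> u1 = transpose_mat U1 *\<^sub>v x)" .
  qed
qed

lemma is_pushout_mult_eq:
  assumes po: "is_pushout A B U1 U2"
  shows "U1 * A = U2 * B"
proof -
  note U = is_pushout_carrier[OF po]
  have cols: "dim_col B = dim_col A"
    using is_pushout_dim_col[OF po] by (rule sym)
  have A: "A \<in> carrier_mat (dim_row A) (dim_col A)" and B: "B \<in> carrier_mat (dim_row B) (dim_col A)"
    using cols by (auto intro: carrier_matI)
  have "row (U1 * A) l = row (U2 * B) l" if l: "l < dim_row U1" for l
  proof -
    have e: "unit_vec (dim_row U1) l \<in> carrier_vec (dim_row U1)" by simp
    have l2: "l < dim_row U2" using is_pushout_dims(2)[OF po] l by simp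
    have "row (U1 * A) l = transpose_mat A *\<^sub>v (transpose_mat U1 *\<^sub>v unit_vec (dim_row U1) l)"
      using row_mult_transpose[OF U(1) A l] transpose_mat_mult_unit_vec[OF l] by simp
    also have "\<dots> = transpose_mat B *\<^sub>v (transpose_mat U2 *\<^sub>v unit_vec (dim_row U1) l)"
      by (rule is_pushout_eq[OF po e])
    also have "\<dots> = row (U2 * B) l"
      using row_mult_transpose[OF U(2) B l] transpose_mat_mult_unit_vec[OF l2] is_pushout_dims(2)[OF po] by simp
    finally show ?thesis .
  qed
  moreover have "dim_row U2 = dim_row U1"
    by (rule is_pushout_dims(2)[OF po])
  ultimately show ?thesis
    using cols by (intro eq_rowI) simp_all
qed

lemma is_pushout_row_nonzero:
  assumes po: "is_pushout A (pi_mat (dim_row S) C * S) U1 U2" and normal: "normal_abs S V"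
    and C: "C \<in> coh_classes (dim_row S) V" and l: "l < dim_row U1"
  shows "row U1 l \<noteq> 0\<^sub>v (dim_row A)"
proof
  assume zero: "row U1 l = 0\<^sub>v (dim_row A)"
  note Cd = coh_classes_finite[OF C] coh_classes_subset[OF C]
  note pi = pi_mat_carrier[OF Cd]
  have S: "S \<in> carrier_mat (dim_row S) (dim_col S)" by (rule carrier_matI[OF refl refl])
  define x :: "rat vec" where "x = unit_vec (dim_row U1) l"
  have x: "x \<in> carrier_vec (dim_row U1)" by (simp add: x_def)
  have U1x: "transpose_mat U1 *\<^sub>v x = 0\<^sub>v (dim_row A)"
    using transpose_mat_mult_unit_vec[OF l] zero by (simp add: x_def)
  have piS: "dim_row (pi_mat (dim_row S) C * S) = card C"
    using pi by simp
  have U2x: "transpose_mat U2 *\<^sub>v x \<in> carrier_vec (card C)"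
    using is_pushout_dims(3)[OF po] piS by (intro carrier_vecI) simp
  have A: "A \<in> carrier_mat (dim_row A) (dim_col S)"
    using is_pushout_dim_col[OF po] pi by (intro carrier_matI) simp_all
  have "transpose_mat S *\<^sub>v (transpose_mat (pi_mat (dim_row S) C) *\<^sub>v (transpose_mat U2 *\<^sub>v x))
      = transpose_mat (pi_mat (dim_row S) C * S) *\<^sub>v (transpose_mat U2 *\<^sub>v x)"
    by (rule transpose_mult_mat_vec[OF pi S U2x, symmetric])
  also have "\<dots> = transpose_mat A *\<^sub>v (transpose_mat U1 *\<^sub>v x)"
    by (rule is_pushout_eq[OF po x, symmetric])
  also have "\<dots> = 0\<^sub>v (dim_col S)"
    unfolding U1x by (rule mult_mat_vec_zero) (simp only: transpose_carrier_mat A)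
  finally have "transpose_mat U2 *\<^sub>v x = 0\<^sub>v (card C)"
    by (rule normal_abs_class_zero[OF normal C U2x])
  then have "x = 0\<^sub>v (dim_row U1)"
    using is_pushout_indep[OF po x U1x] unfolding piS by blast
  moreover have "x $ l = 1"
    using l by (simp add: x_def)
  ultimately show False
    using l by simp
qed

locale row_blocks =
  fixes K :: nat and m :: "nat \<Rightarrow> nat"
begin

definition blocks :: "(nat \<times> nat) list" where
  "blocks = concat (map (\<lambda>k. map (Pair k) [0..<m k]) [0..<K])"

abbreviation N :: nat where "N \<equiv> length blocks"

abbreviation block :: "nat \<Rightarrow> nat" where "block i \<equiv> fst (blocks ! i)"

abbreviation offset :: "nat \<Rightarrow> nat" where "offset i \<equiv> snd (blocks ! i)"

definition stack :: "nat \<Rightarrow> (nat \<Rightarrow> 'a mat) \<Rightarrow> 'a mat" where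
  "stack c F = mat_of_rows c (map (\<lambda>(k, l). row (F k) l) blocks)"

definition embed :: "nat \<Rightarrow> 'a::zero vec \<Rightarrow> 'a vec" where
  "embed k x = vec N (\<lambda>i. if block i = k then x $ offset i else 0)"

lemma set_blocks: "set blocks = {(k, l). k < K \<and> l < m k}"
  unfolding blocks_def by auto

lemma distinct_blocks: "distinct blocks"
  unfolding blocks_def by (induction K) (auto simp: distinct_map inj_on_def)

lemma blocks_nth: "i < N \<Longrightarrow> block i < K \<and> offset i < m (block i)"
  using nth_mem[of i blocks] set_blocks by auto

lemma concat_rows_eq_stack:
  assumes "\<And>k. k < K \<Longrightarrow> dim_row (F k) = m k"
  shows "mat_of_rows c (concat (map (\<lambda>k. rows (F k)) [0..<K])) = stack c F"
proof -
  have "concat (map (\<lambda>k. rows (F k)) [0..<K]) = concat (map (\<lambda>k. map (row (F k)) [0..<m k]) [0..<K])"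
    using assms by (intro arg_cong[where f = concat] map_cong refl) (simp add: rows_def)
  then show ?thesis
    unfolding stack_def blocks_def by (simp add: map_concat o_def)
qed

lemma dim_stack [simp]: "dim_row (stack c F) = N" "dim_col (stack c F) = c"
  unfolding stack_def by simp_all

lemma stack_carrier: "stack c F \<in> carrier_mat N c"
  by (simp add: carrier_matI)

lemma stack_cong: "(\<And>k. k < K \<Longrightarrow> F k = G k) \<Longrightarrow> stack c F = stack c G"
  unfolding stack_def using set_blocks by (intro arg_cong[where f = "mat_of_rows c"] map_cong) auto

lemma row_stack:
  assumes F: "\<And>k. k < K \<Longrightarrow> F k \<in> carrier_mat (m k) c" and i: "i < N"
  shows "row (stack c F) i = row (F (block i)) (offset i)"
  unfolding stack_def using F blocks_nth[OF i] i by (subst mat_of_rows_row) (auto simp: split_beta)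

lemma stack_index:
  assumes F: "\<And>k. k < K \<Longrightarrow> F k \<in> carrier_mat (m k) c" and i: "i < N" and j: "j < c"
  shows "stack c F $$ (i, j) = F (block i) $$ (offset i, j)"
  using row_stack[OF F i] F[of "block i"] blocks_nth[OF i] stack_carrier[of c F] i j
  by (metis carrier_matD index_row(1))

lemma stack_mult:
  assumes F: "\<And>k. k < K \<Longrightarrow> F k \<in> carrier_mat (m k) c" and B: "B \<in> carrier_mat c e"
  shows "stack c F * B = stack e (\<lambda>k. F k * B)"
proof (rule eq_matI)
  fix i j assume "i < dim_row (stack e (\<lambda>k. F k * B))" "j < dim_col (stack e (\<lambda>k. F k * B))"
  then have i: "i < N" and j: "j < e" by simp_all
  have FB: "F k * B \<in> carrier_mat (m k) e" if "k < K" for k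
    using mult_carrier_mat[OF F[OF that] B] .
  show "(stack c F * B) $$ (i, j) = stack e (\<lambda>k. F k * B) $$ (i, j)"
    using i j B blocks_nth[OF i] F[of "block i"]
    by (simp add: stack_index[OF FB i j] row_stack[OF F i])
qed (use B in simp_all)

lemma embed_carrier: "embed k x \<in> carrier_vec N"
  unfolding embed_def by simp

lemma embed_zero: "embed k (0\<^sub>v (m k)) = 0\<^sub>v N"
  unfolding embed_def using blocks_nth by (intro eq_vecI) auto

lemma embed_nonzero: "i < N \<Longrightarrow> embed k x $ i \<noteq> 0 \<Longrightarrow> block i = k"
  unfolding embed_def by (auto split: if_splits)

lemma sum_blocks:
  assumes k: "k < K"
  shows "(\<Sum>i<N. if block i = k then h (offset i) else 0) = (\<Sum>l<m k. h l)"
proof -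
  have bij: "bij_betw ((!) blocks) {..<N} (set blocks)"
    using distinct_blocks by (intro bij_betw_nth) auto
  have "(\<Sum>i<N. if block i = k then h (offset i) else 0)
      = (\<Sum>p\<in>set blocks. if fst p = k then h (snd p) else 0)"
    by (rule sum.reindex_bij_betw[OF bij])
  also have "\<dots> = (\<Sum>p\<in>{p \<in> set blocks. fst p = k}. h (snd p))"
    by (simp add: sum.inter_filter)
  also have "{p \<in> set blocks. fst p = k} = Pair k ` {..<m k}"
    using k by (auto simp: set_blocks)
  also have "(\<Sum>p\<in>Pair k ` {..<m k}. h (snd p)) = (\<Sum>l<m k. h l)"
    by (subst sum.reindex) (auto simp: inj_on_def)
  finally show ?thesis .
qed

lemma stack_transpose_embed:
  assumes F: "\<And>k. k < K \<Longrightarrow> F k \<in> carrier_mat (m k) c" and k: "k < K" and x: "x \<in> carrier_vec (m k)"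
  shows "transpose_mat (stack c F) *\<^sub>v embed k x = transpose_mat (F k) *\<^sub>v x"
proof (rule eq_vecI)
  fix j assume "j < dim_vec (transpose_mat (F k) *\<^sub>v x)"
  then have j: "j < c" using F[OF k] by simp
  have "(transpose_mat (stack c F) *\<^sub>v embed k x) $ j = (\<Sum>i<N. stack c F $$ (i, j) * embed k x $ i)"
    using stack_carrier[of c F] j by (subst index_mult_mat_vec_sum[of _ c N]) (auto simp: embed_carrier)
  also have "\<dots> = (\<Sum>i<N. if block i = k then F k $$ (offset i, j) * x $ offset i else 0)"
    using j by (intro sum.cong refl) (auto simp: embed_def stack_index[OF F _ j])
  also have "\<dots> = (\<Sum>l<m k. F k $$ (l, j) * x $ l)"
    by (rule sum_blocks[OF k])
  also have "\<dots> = (transpose_mat (F k) *\<^sub>v x) $ j"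
    using F[OF k] x j by (subst index_mult_mat_vec_sum[of _ c "m k"]) auto
  finally show "(transpose_mat (stack c F) *\<^sub>v embed k x) $ j = (transpose_mat (F k) *\<^sub>v x) $ j" .
qed (use F[OF k] stack_carrier[of c F] in auto)

lemma embed_surj:
  assumes z: "z \<in> carrier_vec N" and supp: "\<And>i. i < N \<Longrightarrow> z $ i \<noteq> 0 \<Longrightarrow> block i = k"
  shows "z = embed k (vec (m k) (\<lambda>l. z $ inv_into {..<N} ((!) blocks) (k, l)))"
proof (rule eq_vecI)
  have inj: "inj_on ((!) blocks) {..<N}"
    using distinct_blocks by (simp add: inj_on_nth)
  fix i assume "i < dim_vec (embed k (vec (m k) (\<lambda>l. z $ inv_into {..<N} ((!) blocks) (k, l))))"
  then have i: "i < N" by (simp add: embed_def)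
  show "z $ i = embed k (vec (m k) (\<lambda>l. z $ inv_into {..<N} ((!) blocks) (k, l))) $ i"
  proof (cases "block i = k")
    case True
    then have "(k, offset i) = blocks ! i" by (simp add: prod_eq_iff)
    then show ?thesis
      using True i blocks_nth[OF i] inv_into_f_f[OF inj, of i] by (simp add: embed_def)
  next
    case False
    then show ?thesis using supp[OF i] i by (auto simp: embed_def)
  qed
qed (use z in \<open>simp add: embed_def\<close>)

end

section \<open>The join\<close>

locale join_side = row_blocks K m for K :: nat and m :: "nat \<Rightarrow> nat" +
  fixes d :: nat and V :: qvasr and C :: "nat \<Rightarrow> nat set" and U :: "nat \<Rightarrow> rat mat"
  assumes qvasr: "qvasr d V"
    and classes: "\<And>k. k < K \<Longrightarrow> C k \<in> coh_classes d V"
    and U_carrier: "\<And>k. k < K \<Longrightarrow> U k \<in> carrier_mat (m k) (card (C k))"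
    and U_rows_nonzero: "\<And>k l. k < K \<Longrightarrow> l < m k \<Longrightarrow> row (U k) l \<noteq> 0\<^sub>v (card (C k))"
begin

definition T :: "rat mat" where
  "T = stack d (\<lambda>k. U k * pi_mat d (C k))"

lemma C_finite: "k < K \<Longrightarrow> finite (C k)"
  using classes coh_classes_finite by blast

lemma C_subset: "k < K \<Longrightarrow> C k \<subseteq> {..<d}"
  using classes coh_classes_subset by blast

lemma pi_carrier: "k < K \<Longrightarrow> pi_mat d (C k) \<in> carrier_mat (card (C k)) d"
  using pi_mat_carrier[OF C_finite C_subset] .

lemma block_carrier: "k < K \<Longrightarrow> U k * pi_mat d (C k) \<in> carrier_mat (m k) d"
  using mult_carrier_mat[OF U_carrier pi_carrier] .

lemma U_transpose_mult:
  assumes "k < K" "x \<in> carrier_vec (m k)"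
  shows "transpose_mat (U k) *\<^sub>v x \<in> carrier_vec (card (C k))"
  using mult_mat_vec_carrier[of "transpose_mat (U k)" "card (C k)" "m k" x] U_carrier[OF assms(1)] assms(2)
  by simp

lemma T_carrier: "T \<in> carrier_mat N d"
  unfolding T_def by (rule stack_carrier)

lemma row_T:
  assumes i: "i < N"
  shows "row T i = transpose_mat (pi_mat d (C (block i))) *\<^sub>v row (U (block i)) (offset i)"
  using blocks_nth[OF i] row_stack[OF block_carrier i]
    row_mult_transpose[OF U_carrier pi_carrier, of "block i" "offset i"]
  unfolding T_def by simp

lemma T_index:
  "i < N \<Longrightarrow> j < d \<Longrightarrow> T $$ (i, j) = (transpose_mat (pi_mat d (C (block i))) *\<^sub>v row (U (block i)) (offset i)) $ j"
  using row_T T_carrier by (metis carrier_matD index_row(1))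

lemma T_support: "i < N \<Longrightarrow> j < d \<Longrightarrow> T $$ (i, j) \<noteq> 0 \<Longrightarrow> j \<in> C (block i)"
  using T_index blocks_nth U_carrier
  by (metis C_finite C_subset pi_mat_transpose_support row_carrier_vec)

lemma T_row_nonzero:
  assumes i: "i < N"
  shows "\<exists>j<d. T $$ (i, j) \<noteq> 0"
proof -
  have k: "block i < K" and l: "offset i < m (block i)"
    using blocks_nth[OF i] by auto
  have u: "row (U (block i)) (offset i) \<in> carrier_vec (card (C (block i)))"
    using U_carrier[OF k] l by simp
  have "row T i \<noteq> 0\<^sub>v d"
    using row_T[OF i] pi_mat_transpose_inj[OF C_finite[OF k] C_subset[OF k] u] U_rows_nonzero[OF k l]
    by auto
  then obtain j where "j < d" "row T i $ j \<noteq> 0"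
    using T_carrier i by (auto elim: nonzero_vec_index[rotated])
  then show ?thesis
    using T_carrier i by auto
qed

lemma coherent_mat_T: "coherent_mat V T"
proof (rule coherent_matI)
  fix i j j' assume "i < dim_row T" "j < dim_col T" "j' < dim_col T" "T $$ (i, j) \<noteq> 0" "T $$ (i, j') \<noteq> 0"
  then show "coherent_dims V j j'"
    using T_carrier T_support blocks_nth classes coh_classes_coherent by (metis carrier_matD)
qed

lemma T_transpose_embed:
  assumes k: "k < K" and x: "x \<in> carrier_vec (m k)"
  shows "transpose_mat T *\<^sub>v embed k x = transpose_mat (pi_mat d (C k)) *\<^sub>v (transpose_mat (U k) *\<^sub>v x)"
proof -
  have "transpose_mat T *\<^sub>v embed k x = transpose_mat (U k * pi_mat d (C k)) *\<^sub>v x"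
    unfolding T_def using stack_transpose_embed[OF block_carrier k x] by simp
  also have "\<dots> = transpose_mat (pi_mat d (C k)) *\<^sub>v (transpose_mat (U k) *\<^sub>v x)"
    by (rule transpose_mult_mat_vec[OF U_carrier[OF k] pi_carrier[OF k] x])
  finally show ?thesis .
qed

lemma T_mult: "S \<in> carrier_mat d n \<Longrightarrow> T * S = stack n (\<lambda>k. U k * pi_mat d (C k) * S)"
  unfolding T_def by (rule stack_mult[OF block_carrier])

lemma qvasr_image: "qvasr N (vasr_image V T)"
  using qvasr_vasr_image[OF T_carrier qvasr T_row_nonzero] .

lemma lin_sim_image: "vasr_image V T \<subseteq> W \<Longrightarrow> lin_sim d (qvasr_step V) T (qvasr_step W)"
  using lin_sim_vasr_image[OF T_carrier qvasr T_row_nonzero coherent_mat_T] .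

lemma image_coherent_same_class:
  assumes "coherent_dims (vasr_image V T) i i'" and i: "i < N" and i': "i' < N"
  shows "C (block i) = C (block i')"
proof -
  have piv: "pivot T p < d \<and> T $$ (p, pivot T p) \<noteq> 0" if "p < N" for p
    using pivot_nonzero[of T p] T_row_nonzero[OF that] T_carrier by auto
  have "coherent_dims V (pivot T i) (pivot T i')"
    using coherent_dims_vasr_image[OF assms(1)] i i' T_carrier by simp
  then show ?thesis
    using coh_classes_eq classes blocks_nth T_support piv i i' by metis
qed

lemma lin_sim_image_factor:
  assumes T': "T' \<in> carrier_mat m' N" and V': "qvasr m' V'" and R: "T' * T = R"
    and sim: "lin_sim d (qvasr_step V) R (qvasr_step V')"
    and link: "\<And>i p. i < m' \<Longrightarrow> p < N \<Longrightarrow> T' $$ (i, p) \<noteq> 0 \<Longrightarrow>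
       \<exists>j<d. row R i $ j \<noteq> 0 \<and> j \<in> C (block p)"
  shows "lin_sim N (qvasr_step (vasr_image V T)) T' (qvasr_step V')"
proof (rule lin_sim_vasr_image_factor[OF T' T_carrier qvasr V' T_row_nonzero])
  show "lin_sim d (qvasr_step V) (T' * T) (qvasr_step V')"
    using sim R by simp
  fix i p assume ip: "i < m'" "p < N" "T' $$ (i, p) \<noteq> 0"
  then obtain j where j: "j < d" "row R i $ j \<noteq> 0" "j \<in> C (block p)"
    using link by blast
  have "coherent_dims V j j'" if "j' < d" "T $$ (p, j') \<noteq> 0" for j'
    using coh_classes_coherent[OF classes j(3)] T_support[OF ip(2) that] blocks_nth[OF ip(2)] by blast
  moreover have "(T' * T) $$ (i, j) \<noteq> 0"
    using j ip T' T_carrier R by auto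
  ultimately show "\<exists>j<d. (T' * T) $$ (i, j) \<noteq> 0 \<and> (\<forall>j'<d. T $$ (p, j') \<noteq> 0 \<longrightarrow> coherent_dims V j j')"
    using j by blast
qed

end

locale join_setup =
  fixes n :: nat and S1 S2 :: "rat mat" and V1 V2 :: qvasr
    and ps :: "(nat set \<times> nat set) list" and Us :: "(rat mat \<times> rat mat) list"
  assumes abs1: "is_abs n S1 V1" and abs2: "is_abs n S2 V2"
    and normal1: "normal_abs S1 V1" and normal2: "normal_abs S2 V2"
    and distinct_ps: "distinct ps"
    and set_ps: "set ps = coh_classes (dim_row S1) V1 \<times> coh_classes (dim_row S2) V2"
    and length_Us: "length Us = length ps"
    and pushout: "\<And>k. k < length ps \<Longrightarrow> is_pushout (pi_mat (dim_row S1) (fst (ps ! k)) * S1)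
       (pi_mat (dim_row S2) (snd (ps ! k)) * S2) (fst (Us ! k)) (snd (Us ! k))"
begin

abbreviation "d1 \<equiv> dim_row S1"
abbreviation "d2 \<equiv> dim_row S2"
abbreviation "C1 k \<equiv> fst (ps ! k)"
abbreviation "C2 k \<equiv> snd (ps ! k)"
abbreviation "U1 k \<equiv> fst (Us ! k)"
abbreviation "U2 k \<equiv> snd (Us ! k)"

lemma S1_carrier: "S1 \<in> carrier_mat d1 n"
  using abs1 unfolding is_abs_def by (auto intro: carrier_matI)

lemma S2_carrier: "S2 \<in> carrier_mat d2 n"
  using abs2 unfolding is_abs_def by (auto intro: carrier_matI)

lemma dim_col_S: "dim_col S1 = n" "dim_col S2 = n"
  using abs1 abs2 unfolding is_abs_def by simp_all

lemma transpose_S_zero: "transpose_mat S1 *\<^sub>v 0\<^sub>v d1 = 0\<^sub>v n" "transpose_mat S2 *\<^sub>v 0\<^sub>v d2 = 0\<^sub>v n"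
  by (rule mult_mat_vec_zero, simp only: transpose_carrier_mat S1_carrier S2_carrier)+

lemma classes: "k < length ps \<Longrightarrow> C1 k \<in> coh_classes d1 V1 \<and> C2 k \<in> coh_classes d2 V2"
  using set_ps nth_mem[of k ps] by (cases "ps ! k") auto

lemma pi_S_dim_row:
  "k < length ps \<Longrightarrow> dim_row (pi_mat d1 (C1 k) * S1) = card (C1 k)"
  "k < length ps \<Longrightarrow> dim_row (pi_mat d2 (C2 k) * S2) = card (C2 k)"
  using classes pi_mat_carrier coh_classes_finite coh_classes_subset by (metis carrier_matD(1) index_mult_mat(2))+

lemma U_dims:
  "k < length ps \<Longrightarrow> dim_col (U1 k) = card (C1 k)"
  "k < length ps \<Longrightarrow> dim_row (U2 k) = dim_row (U1 k)"
  "k < length ps \<Longrightarrow> dim_col (U2 k) = card (C2 k)"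
  using is_pushout_dims[OF pushout] pi_S_dim_row by metis+

sublocale row_blocks "length ps" "\<lambda>k. dim_row (U1 k)" .

sublocale side1: join_side "length ps" "\<lambda>k. dim_row (U1 k)" d1 V1 C1 U1
proof
  show "qvasr d1 V1" using abs1 unfolding is_abs_def by simp
  fix k assume k: "k < length ps"
  show "C1 k \<in> coh_classes d1 V1" using classes[OF k] by simp
  show "U1 k \<in> carrier_mat (dim_row (U1 k)) (card (C1 k))"
    using U_dims(1)[OF k] by (intro carrier_matI) simp_all
  fix l assume "l < dim_row (U1 k)"
  then show "row (U1 k) l \<noteq> 0\<^sub>v (card (C1 k))"
    using is_pushout_row_nonzero[OF pushout[OF k] normal2] classes[OF k] pi_S_dim_row(1)[OF k] by metis
qed

sublocale side2: join_side "length ps" "\<lambda>k. dim_row (U1 k)" d2 V2 C2 U2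
proof
  show "qvasr d2 V2" using abs2 unfolding is_abs_def by simp
  fix k assume k: "k < length ps"
  show "C2 k \<in> coh_classes d2 V2" using classes[OF k] by simp
  show "U2 k \<in> carrier_mat (dim_row (U1 k)) (card (C2 k))"
    using U_dims(2,3)[OF k] by (intro carrier_matI) simp_all
  fix l assume "l < dim_row (U1 k)"
  then have "l < dim_row (U2 k)" using U_dims(2)[OF k] by simp
  then show "row (U2 k) l \<noteq> 0\<^sub>v (card (C2 k))"
    using is_pushout_row_nonzero[OF is_pushout_sym[OF pushout[OF k]] normal1] classes[OF k] pi_S_dim_row(2)[OF k]
    by metis
qed

definition S_join :: "rat mat" where
  "S_join = stack n (\<lambda>k. U1 k * pi_mat d1 (C1 k) * S1)"

definition V_join :: qvasr where
  "V_join = vasr_image V1 side1.T \<union> vasr_image V2 side2.T"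

lemma T1_mult: "side1.T * S1 = S_join"
  unfolding S_join_def by (rule side1.T_mult[OF S1_carrier])

lemma T2_mult: "side2.T * S2 = S_join"
proof -
  have "U2 k * pi_mat d2 (C2 k) * S2 = U1 k * pi_mat d1 (C1 k) * S1" if k: "k < length ps" for k
  proof -
    have "U2 k * pi_mat d2 (C2 k) * S2 = U2 k * (pi_mat d2 (C2 k) * S2)"
      by (rule assoc_mult_mat[OF side2.U_carrier[OF k] side2.pi_carrier[OF k] S2_carrier])
    also have "\<dots> = U1 k * (pi_mat d1 (C1 k) * S1)"
      by (rule is_pushout_mult_eq[OF pushout[OF k], symmetric])
    also have "\<dots> = U1 k * pi_mat d1 (C1 k) * S1"
      by (rule assoc_mult_mat[OF side1.U_carrier[OF k] side1.pi_carrier[OF k] S1_carrier, symmetric])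
    finally show ?thesis .
  qed
  then show ?thesis
    unfolding S_join_def side2.T_mult[OF S2_carrier] by (rule stack_cong)
qed

lemma dim_S_join: "dim_row S_join = N" "dim_col S_join = n"
  unfolding S_join_def by simp_all

lemma is_abs_join: "is_abs n S_join V_join"
  unfolding is_abs_def V_join_def dim_S_join
  using qvasr_Un[OF side1.qvasr_image side2.qvasr_image] by simp

lemma abs_le_join1: "abs_le (S1, V1) (S_join, V_join)"
  unfolding abs_le_def prod.case dim_S_join
  using side1.lin_sim_image[of V_join] side1.T_carrier T1_mult
  by (intro bexI[of _ side1.T]) (auto simp: V_join_def)

lemma abs_le_join2: "abs_le (S2, V2) (S_join, V_join)"
  unfolding abs_le_def prod.case dim_S_join
  using side2.lin_sim_image[of V_join] side2.T_carrier T2_mult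
  by (intro bexI[of _ side2.T]) (auto simp: V_join_def)


lemma coherent_dims_join_block:
  assumes "coherent_dims V_join i i'" and i: "i < N" "i' < N"
  shows "block i = block i'"
proof -
  have "coherent_dims (vasr_image V1 side1.T) i i'" "coherent_dims (vasr_image V2 side2.T) i i'"
    using assms(1) unfolding V_join_def coherent_dims_def by auto
  then have "C1 (block i) = C1 (block i')" "C2 (block i) = C2 (block i')"
    using side1.image_coherent_same_class side2.image_coherent_same_class i by blast+
  then have "ps ! block i = ps ! block i'"
    by (simp add: prod_eq_iff)
  then show ?thesis
    using nth_eq_iff_index_eq[OF distinct_ps] blocks_nth i by blast
qed

lemma transpose_S_join_embed_zero:
  assumes k: "k < length ps" and x: "x \<in> carrier_vec (dim_row (U1 k))"
    and zero: "transpose_mat S_join *\<^sub>v embed k x = 0\<^sub>v n"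
  shows "x = 0\<^sub>v (dim_row (U1 k))"
proof -
  have "transpose_mat S1 *\<^sub>v (transpose_mat (pi_mat d1 (C1 k)) *\<^sub>v (transpose_mat (U1 k) *\<^sub>v x)) = 0\<^sub>v (dim_col S1)"
    using zero transpose_mult_mat_vec[OF side1.T_carrier S1_carrier embed_carrier[of k x]]
    unfolding T1_mult side1.T_transpose_embed[OF k x] dim_col_S by simp
  then have "transpose_mat (U1 k) *\<^sub>v x = 0\<^sub>v (card (C1 k))"
    using normal_abs_class_zero[OF normal1 _ side1.U_transpose_mult[OF k x]] classes[OF k] by blast
  moreover have "transpose_mat S2 *\<^sub>v (transpose_mat (pi_mat d2 (C2 k)) *\<^sub>v (transpose_mat (U2 k) *\<^sub>v x))
      = 0\<^sub>v (dim_col S2)"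
    using zero transpose_mult_mat_vec[OF side2.T_carrier S2_carrier embed_carrier[of k x]]
    unfolding T2_mult side2.T_transpose_embed[OF k x] dim_col_S by simp
  then have "transpose_mat (U2 k) *\<^sub>v x = 0\<^sub>v (card (C2 k))"
    using normal_abs_class_zero[OF normal2 _ side2.U_transpose_mult[OF k x]] classes[OF k] by blast
  ultimately show ?thesis
    using is_pushout_indep[OF pushout[OF k] x] pi_S_dim_row[OF k] by simp
qed

lemma normal_abs_join: "normal_abs S_join V_join"
proof -
  have "z = 0\<^sub>v N" if z: "z \<in> carrier_vec N" and coh: "coherent_row N V_join z"
    and zero: "transpose_mat S_join *\<^sub>v z = 0\<^sub>v n" for z
  proof (rule ccontr)
    assume "z \<noteq> 0\<^sub>v N"
    then obtain i0 where i0: "i0 < N" "z $ i0 \<noteq> 0"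
      using nonzero_vec_index[OF z] by blast
    obtain D where D: "D \<in> coh_classes N V_join" "\<And>i. i < N \<Longrightarrow> z $ i \<noteq> 0 \<Longrightarrow> i \<in> D"
      using coh unfolding coherent_row_def by blast
    have "block i = block i0" if "i < N" "z $ i \<noteq> 0" for i
      using coherent_dims_join_block coh_classes_coherent[OF D(1)] D(2) that i0 by metis
    then obtain x where x: "x \<in> carrier_vec (dim_row (U1 (block i0)))" and zx: "z = embed (block i0) x"
      using embed_surj[OF z] by (metis dim_vec carrier_vecI)
    then have "x = 0\<^sub>v (dim_row (U1 (block i0)))"
      using transpose_S_join_embed_zero blocks_nth[OF i0(1)] zero by blast
    then show False
      using i0 zx by (simp add: embed_zero)
  qed
  then show ?thesis
    unfolding normal_abs_def dim_S_join by auto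
qed

lemma join_rows_zero_iff:
  assumes w1: "w1 \<in> carrier_vec d1" "coherent_vec V1 w1" and w2: "w2 \<in> carrier_vec d2" "coherent_vec V2 w2"
    and eq: "transpose_mat S1 *\<^sub>v w1 = transpose_mat S2 *\<^sub>v w2"
  shows "w1 = 0\<^sub>v d1 \<longleftrightarrow> w2 = 0\<^sub>v d2"
  using eq transpose_S_zero normal_abs_coherent_zero[OF normal1 w1] normal_abs_coherent_zero[OF normal2 w2]
  by (auto simp: dim_col_S)

lemma join_factor:
  assumes w1: "w1 \<in> carrier_vec d1" "coherent_vec V1 w1" and w2: "w2 \<in> carrier_vec d2" "coherent_vec V2 w2"
    and eq: "transpose_mat S1 *\<^sub>v w1 = transpose_mat S2 *\<^sub>v w2"
  obtains y where "y \<in> carrier_vec N" "transpose_mat side1.T *\<^sub>v y = w1" "transpose_mat side2.T *\<^sub>v y = w2"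
    "\<And>p. p < N \<Longrightarrow> y $ p \<noteq> 0 \<Longrightarrow>
       (\<exists>j<d1. w1 $ j \<noteq> 0 \<and> j \<in> C1 (block p)) \<and> (\<exists>j<d2. w2 $ j \<noteq> 0 \<and> j \<in> C2 (block p))"
proof (cases "w1 = 0\<^sub>v d1")
  case True
  then have "w2 = 0\<^sub>v d2"
    using join_rows_zero_iff[OF w1 w2 eq] by simp
  moreover have "transpose_mat side1.T *\<^sub>v 0\<^sub>v N = 0\<^sub>v d1" "transpose_mat side2.T *\<^sub>v 0\<^sub>v N = 0\<^sub>v d2"
    by (rule mult_mat_vec_zero, simp only: transpose_carrier_mat side1.T_carrier side2.T_carrier)+
  ultimately show thesis
    using that[of "0\<^sub>v N"] True by simp
next
  case False
  then have w2_nz: "w2 \<noteq> 0\<^sub>v d2"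
    using join_rows_zero_iff[OF w1 w2 eq] by simp
  obtain Ca Cb where Ca: "Ca \<in> coh_classes d1 V1" "\<And>j. j < d1 \<Longrightarrow> w1 $ j \<noteq> 0 \<Longrightarrow> j \<in> Ca"
    and Cb: "Cb \<in> coh_classes d2 V2" "\<And>j. j < d2 \<Longrightarrow> w2 $ j \<noteq> 0 \<Longrightarrow> j \<in> Cb"
    using coherent_rowI[OF w1(1) False w1(2)] coherent_rowI[OF w2(1) w2_nz w2(2)]
    unfolding coherent_row_def by metis
  obtain k where k: "k < length ps" and C1k: "C1 k = Ca" and C2k: "C2 k = Cb"
    using set_ps Ca(1) Cb(1) by (metis fst_conv snd_conv in_set_conv_nth mem_Sigma_iff)
  define u1 where "u1 = pi_mat d1 Ca *\<^sub>v w1"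
  define u2 where "u2 = pi_mat d2 Cb *\<^sub>v w2"
  have u: "u1 \<in> carrier_vec (card Ca)" "u2 \<in> carrier_vec (card Cb)"
    using side1.pi_carrier[OF k] side2.pi_carrier[OF k] w1 w2 C1k C2k by (simp_all add: u1_def u2_def)
  have lift1: "transpose_mat (pi_mat d1 Ca) *\<^sub>v u1 = w1"
    unfolding u1_def
    by (rule pi_mat_transpose_pi_mat[OF coh_classes_finite[OF Ca(1)] coh_classes_subset[OF Ca(1)] w1(1) Ca(2)])
  have lift2: "transpose_mat (pi_mat d2 Cb) *\<^sub>v u2 = w2"
    unfolding u2_def
    by (rule pi_mat_transpose_pi_mat[OF coh_classes_finite[OF Cb(1)] coh_classes_subset[OF Cb(1)] w2(1) Cb(2)])
  have "transpose_mat (pi_mat d1 Ca * S1) *\<^sub>v u1 = transpose_mat (pi_mat d2 Cb * S2) *\<^sub>v u2"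
    using transpose_mult_mat_vec[OF side1.pi_carrier[OF k] S1_carrier]
      transpose_mult_mat_vec[OF side2.pi_carrier[OF k] S2_carrier] u lift1 lift2 eq C1k C2k
    by simp
  then obtain x where x: "x \<in> carrier_vec (dim_row (U1 k))"
    and u1x: "u1 = transpose_mat (U1 k) *\<^sub>v x" and u2x: "u2 = transpose_mat (U2 k) *\<^sub>v x"
    using is_pushout_span[OF pushout[OF k]] u pi_S_dim_row[OF k] C1k C2k by auto
  show thesis
  proof (rule that[of "embed k x"])
    show "embed k x \<in> carrier_vec N" by (rule embed_carrier)
    show "transpose_mat side1.T *\<^sub>v embed k x = w1"
      using side1.T_transpose_embed[OF k x] lift1 u1x C1k by simp
    show "transpose_mat side2.T *\<^sub>v embed k x = w2"
      using side2.T_transpose_embed[OF k x] lift2 u2x C2k by simp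
  next
    fix p assume "p < N" "embed k x $ p \<noteq> 0"
    then have "block p = k" by (rule embed_nonzero)
    moreover obtain j1 j2 where "j1 < d1" "w1 $ j1 \<noteq> 0" "j2 < d2" "w2 $ j2 \<noteq> 0"
      using nonzero_vec_index[OF w1(1) False] nonzero_vec_index[OF w2(1) w2_nz] by metis
    ultimately show "(\<exists>j<d1. w1 $ j \<noteq> 0 \<and> j \<in> C1 (block p)) \<and> (\<exists>j<d2. w2 $ j \<noteq> 0 \<and> j \<in> C2 (block p))"
      using Ca(2) Cb(2) C1k C2k by blast
  qed
qed

lemma join_factor_mat:
  assumes R1: "R1 \<in> carrier_mat m' d1" "coherent_mat V1 R1" and R2: "R2 \<in> carrier_mat m' d2" "coherent_mat V2 R2"
    and eq: "R1 * S1 = R2 * S2"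
  obtains T' where "T' \<in> carrier_mat m' N" "T' * side1.T = R1" "T' * side2.T = R2"
    "\<And>i p. i < m' \<Longrightarrow> p < N \<Longrightarrow> T' $$ (i, p) \<noteq> 0 \<Longrightarrow>
       (\<exists>j<d1. row R1 i $ j \<noteq> 0 \<and> j \<in> C1 (block p)) \<and> (\<exists>j<d2. row R2 i $ j \<noteq> 0 \<and> j \<in> C2 (block p))"
proof -
  have "\<exists>y. y \<in> carrier_vec N \<and> transpose_mat side1.T *\<^sub>v y = row R1 i \<and> transpose_mat side2.T *\<^sub>v y = row R2 i \<and>
      (\<forall>p<N. y $ p \<noteq> 0 \<longrightarrow>
        (\<exists>j<d1. row R1 i $ j \<noteq> 0 \<and> j \<in> C1 (block p)) \<and> (\<exists>j<d2. row R2 i $ j \<noteq> 0 \<and> j \<in> C2 (block p)))"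
    if i: "i < m'" for i
  proof -
    have w1: "row R1 i \<in> carrier_vec d1" "coherent_vec V1 (row R1 i)"
      using R1 i unfolding coherent_mat_def by auto
    have w2: "row R2 i \<in> carrier_vec d2" "coherent_vec V2 (row R2 i)"
      using R2 i unfolding coherent_mat_def by auto
    have "transpose_mat S1 *\<^sub>v row R1 i = transpose_mat S2 *\<^sub>v row R2 i"
      using row_mult_transpose[OF R1(1) S1_carrier i] row_mult_transpose[OF R2(1) S2_carrier i] eq
      by simp
    from join_factor[OF w1 w2 this] show ?thesis
      by blast
  qed
  then obtain Y where Y: "\<And>i. i < m' \<Longrightarrow> Y i \<in> carrier_vec N \<and>
      transpose_mat side1.T *\<^sub>v Y i = row R1 i \<and> transpose_mat side2.T *\<^sub>v Y i = row R2 i \<and>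
      (\<forall>p<N. Y i $ p \<noteq> 0 \<longrightarrow>
        (\<exists>j<d1. row R1 i $ j \<noteq> 0 \<and> j \<in> C1 (block p)) \<and> (\<exists>j<d2. row R2 i $ j \<noteq> 0 \<and> j \<in> C2 (block p)))"
    by metis
  show thesis
  proof (rule that[of "mat_of_rows N (map Y [0..<m'])"])
    show "mat_of_rows N (map Y [0..<m']) \<in> carrier_mat m' N"
      by (simp add: mat_of_rows_def)
    show "mat_of_rows N (map Y [0..<m']) * side1.T = R1"
      using side1.T_carrier R1(1) Y by (intro mat_of_rows_mult_eq) auto
    show "mat_of_rows N (map Y [0..<m']) * side2.T = R2"
      using side2.T_carrier R2(1) Y by (intro mat_of_rows_mult_eq) auto
  next
    fix i p assume "i < m'" "p < N" "mat_of_rows N (map Y [0..<m']) $$ (i, p) \<noteq> 0"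
    then show "(\<exists>j<d1. row R1 i $ j \<noteq> 0 \<and> j \<in> C1 (block p)) \<and> (\<exists>j<d2. row R2 i $ j \<noteq> 0 \<and> j \<in> C2 (block p))"
      using Y by (simp add: mat_of_rows_index)
  qed
qed

lemma abs_le_join_if_upper_bound:
  assumes ub: "is_upper_bound n (S1, V1) (S2, V2) (S', V')"
  shows "abs_le (S_join, V_join) (S', V')"
proof -
  define m' where "m' = dim_row S'"
  have V': "qvasr m' V'"
    using ub unfolding is_upper_bound_def is_abs_def m'_def by simp
  obtain R1 where R1: "R1 \<in> carrier_mat m' d1" "lin_sim d1 (qvasr_step V1) R1 (qvasr_step V')" "R1 * S1 = S'"
    using ub unfolding is_upper_bound_def abs_le_def m'_def by auto
  obtain R2 where R2: "R2 \<in> carrier_mat m' d2" "lin_sim d2 (qvasr_step V2) R2 (qvasr_step V')" "R2 * S2 = S'"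
    using ub unfolding is_upper_bound_def abs_le_def m'_def by auto
  obtain T' where T': "T' \<in> carrier_mat m' N" and T'T1: "T' * side1.T = R1" and T'T2: "T' * side2.T = R2"
    and link: "\<And>i p. i < m' \<Longrightarrow> p < N \<Longrightarrow> T' $$ (i, p) \<noteq> 0 \<Longrightarrow>
       (\<exists>j<d1. row R1 i $ j \<noteq> 0 \<and> j \<in> C1 (block p)) \<and> (\<exists>j<d2. row R2 i $ j \<noteq> 0 \<and> j \<in> C2 (block p))"
    using join_factor_mat[OF R1(1) lin_sim_coherent_mat[OF R1(2) side1.qvasr V' R1(1)]
        R2(1) lin_sim_coherent_mat[OF R2(2) side2.qvasr V' R2(1)]] R1(3) R2(3)
    by metis
  have "T' * S_join = S'"
    using assoc_mult_mat[OF T' side1.T_carrier S1_carrier] T1_mult T'T1 R1(3) by simp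
  moreover have "lin_sim N (qvasr_step V_join) T' (qvasr_step V')"
    unfolding V_join_def
  proof (rule lin_sim_Un)
    show "lin_sim N (qvasr_step (vasr_image V1 side1.T)) T' (qvasr_step V')"
      using link by (intro side1.lin_sim_image_factor[OF T' V' T'T1 R1(2)]) blast
    show "lin_sim N (qvasr_step (vasr_image V2 side2.T)) T' (qvasr_step V')"
      using link by (intro side2.lin_sim_image_factor[OF T' V' T'T2 R2(2)]) blast
  qed
  ultimately show ?thesis
    unfolding abs_le_def m'_def using T' by (auto simp: dim_S_join)
qed

lemma join_result_matrices:
  "mat_of_rows (dim_col S1) (concat (map (\<lambda>((A1, A2), (W1, W2)). rows (W1 * pi_mat d1 A1 * S1)) (zip ps Us)))
    = S_join"
  "mat_of_rows d1 (concat (map (\<lambda>((A1, A2), (W1, W2)). rows (W1 * pi_mat d1 A1)) (zip ps Us))) = side1.T"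
  "mat_of_rows d2 (concat (map (\<lambda>((A1, A2), (W1, W2)). rows (W2 * pi_mat d2 A2)) (zip ps Us))) = side2.T"
proof -
  have zip: "zip ps Us = map (\<lambda>k. (ps ! k, Us ! k)) [0..<length ps]"
    using length_Us by (intro nth_equalityI) auto
  have "dim_col S1 = n" by (rule dim_col_S(1))
  then show "mat_of_rows (dim_col S1) (concat (map (\<lambda>((A1, A2), (W1, W2)). rows (W1 * pi_mat d1 A1 * S1)) (zip ps Us)))
      = S_join"
    unfolding S_join_def zip by (simp add: o_def case_prod_beta concat_rows_eq_stack)
  show "mat_of_rows d1 (concat (map (\<lambda>((A1, A2), (W1, W2)). rows (W1 * pi_mat d1 A1)) (zip ps Us))) = side1.T"
    unfolding side1.T_def zip by (simp add: o_def case_prod_beta concat_rows_eq_stack)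
  show "mat_of_rows d2 (concat (map (\<lambda>((A1, A2), (W1, W2)). rows (W2 * pi_mat d2 A2)) (zip ps Us))) = side2.T"
    unfolding side2.T_def zip using U_dims(2) by (simp add: o_def case_prod_beta concat_rows_eq_stack)
qed

end

theorem proposition2:
  fixes n :: nat and S1 S2 S :: "rat mat" and V1 V2 V :: qvasr
  assumes "is_abs n S1 V1" and "is_abs n S2 V2"
    and "normal_abs S1 V1" and "normal_abs S2 V2"
    and "join_result S1 V1 S2 V2 S V"
  shows "normal_abs S V \<and> abs_lub n (S1, V1) (S2, V2) (S, V)"
proof -
  from assms(5) obtain ps Us where "distinct ps"
    "set ps = coh_classes (dim_row S1) V1 \<times> coh_classes (dim_row S2) V2" "length Us = length ps"
    "\<forall>k < length ps. is_pushout (pi_mat (dim_row S1) (fst (ps ! k)) * S1)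
       (pi_mat (dim_row S2) (snd (ps ! k)) * S2) (fst (Us ! k)) (snd (Us ! k))"
    and S: "S = mat_of_rows (dim_col S1)
       (concat (map (\<lambda>((C1, C2), (U1, U2)). rows (U1 * pi_mat (dim_row S1) C1 * S1)) (zip ps Us)))"
    and V: "V = vasr_image V1 (mat_of_rows (dim_row S1)
         (concat (map (\<lambda>((C1, C2), (U1, U2)). rows (U1 * pi_mat (dim_row S1) C1)) (zip ps Us))))
       \<union> vasr_image V2 (mat_of_rows (dim_row S2)
         (concat (map (\<lambda>((C1, C2), (U1, U2)). rows (U2 * pi_mat (dim_row S2) C2)) (zip ps Us))))"
    unfolding join_result_def by blast
  then interpret join_setup n S1 S2 V1 V2 ps Us
    using assms(1-4) by unfold_locales blast+
  have "S = S_join" "V = V_join"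
    using join_result_matrices unfolding S V V_join_def by simp_all
  moreover have "abs_le (S_join, V_join) C'" if "is_upper_bound n (S1, V1) (S2, V2) C'" for C'
    using abs_le_join_if_upper_bound that by (cases C') simp
  ultimately show ?thesis
    using normal_abs_join is_abs_join abs_le_join1 abs_le_join2
    unfolding abs_lub_def is_upper_bound_def by simp
qed

end
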